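(* A strongly semiconnected digraph is doubly stochasticable if and only if all of its strongly connected components are doubly stochasticable.
   Context: A digraph $G=(V,E)$, $V=\{v_1,\dots,v_n\}$, $E\subseteq V\times V$. $G$ is strongly semiconnected if, for all $v,w\in V$, a directed path from $v$ to $w$ implies one from $w$ to $v$. The strongly connected components are the maximal strongly connected subdigraphs. An adjacency matrix assigned to $G$ is $A\in\mathbb{R}^{n\times n}_{\geq0}$ with $a_{ij}>0$ iff $(v_i,v_j)\in E$; $G$ is doubly stochasticable if it admits an adjacency matrix whose row and column sums all equal $1$. *)

theory Defs
  imports Main "HOL.Real"
begin

definition digraph :: "'a set \<Rightarrow> ('a \<times> 'a) set \<Rightarrow> bool" where
  "digraph V E \<longleftrightarrow> finite V \<and> E \<subseteq> V \<times> V"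

definition strongly_semiconnected :: "'a set \<Rightarrow> ('a \<times> 'a) set \<Rightarrow> bool" where
  "strongly_semiconnected V E \<longleftrightarrow>
     (\<forall>v\<in>V. \<forall>w\<in>V. (v, w) \<in> E\<^sup>* \<longrightarrow> (w, v) \<in> E\<^sup>*)"

definition subdigraph :: "'a set \<Rightarrow> ('a \<times> 'a) set \<Rightarrow> 'a set \<Rightarrow> ('a \<times> 'a) set \<Rightarrow> bool" where
  "subdigraph V' E' V E \<longleftrightarrow> V' \<subseteq> V \<and> E' \<subseteq> E \<and> E' \<subseteq> V' \<times> V'"

definition strongly_connected :: "'a set \<Rightarrow> ('a \<times> 'a) set \<Rightarrow> bool" where
  "strongly_connected V E \<longleftrightarrow> V \<noteq> {} \<and> (\<forall>v\<in>V. \<forall>w\<in>V. (v, w) \<in> E\<^sup>*)"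

definition scc :: "'a set \<Rightarrow> ('a \<times> 'a) set \<Rightarrow> 'a set \<Rightarrow> ('a \<times> 'a) set \<Rightarrow> bool" where
  "scc V E V' E' \<longleftrightarrow> subdigraph V' E' V E \<and> strongly_connected V' E' \<and>
     (\<forall>V'' E''. subdigraph V'' E'' V E \<and> strongly_connected V'' E'' \<and>
        V' \<subseteq> V'' \<and> E' \<subseteq> E'' \<longrightarrow> V'' = V' \<and> E'' = E')"

definition adjacency_matrix :: "'a set \<Rightarrow> ('a \<times> 'a) set \<Rightarrow> ('a \<Rightarrow> 'a \<Rightarrow> real) \<Rightarrow> bool" where
  "adjacency_matrix V E A \<longleftrightarrow>
     (\<forall>v\<in>V. \<forall>w\<in>V. A v w \<ge> 0 \<and> (A v w > 0 \<longleftrightarrow> (v, w) \<in> E))"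

definition doubly_stochasticable :: "'a set \<Rightarrow> ('a \<times> 'a) set \<Rightarrow> bool" where
  "doubly_stochasticable V E \<longleftrightarrow>
     (\<exists>A. adjacency_matrix V E A \<and>
          (\<forall>v\<in>V. (\<Sum>w\<in>V. A v w) = 1) \<and>
          (\<forall>w\<in>V. (\<Sum>v\<in>V. A v w) = 1))"

end

theory Submission
  imports Defs
begin

text \<open>In a strongly semiconnected digraph reachability is an equivalence relation on the
  vertices. Its classes, with the induced edges, are exactly the strongly connected components,
  and every edge runs inside one class. Hence every adjacency matrix is block diagonal with respect
  to this partition, and it is doubly stochastic iff each diagonal block is; conversely,
  doubly stochastic blocks chosen independently assemble into a doubly stochastic matrix.\<close>

lemma adjacency_matrix_zero:
  assumes "adjacency_matrix V E A" "v \<in> V" "w \<in> V" "(v, w) \<notin> E"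
  shows "A v w = 0"
  using assms unfolding adjacency_matrix_def by force

lemma doubly_stochasticable_restrict_class:
  assumes fin: "finite V" and R: "equiv V R" and ER: "E \<subseteq> R" and S: "S \<in> V // R"
    and "doubly_stochasticable V E"
  shows "doubly_stochasticable S (E \<inter> S \<times> S)"
proof -
  obtain A where adj: "adjacency_matrix V E A"
    and rows: "\<forall>v\<in>V. (\<Sum>w\<in>V. A v w) = 1" and cols: "\<forall>w\<in>V. (\<Sum>v\<in>V. A v w) = 1"
    using assms(5) unfolding doubly_stochasticable_def by blast
  have SV: "S \<subseteq> V" using in_quotient_imp_subset[OF R S] .
  have closed: "y \<in> S" if "x \<in> S" "(x, y) \<in> R \<or> (y, x) \<in> R" for x y
    using that R S in_quotient_imp_closed sym_def unfolding equiv_def by metis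
  have "(\<Sum>w\<in>S. A v w) = 1" if v: "v \<in> S" for v
  proof -
    have "(\<Sum>w\<in>S. A v w) = (\<Sum>w\<in>V. A v w)"
      using fin SV v closed ER adjacency_matrix_zero[OF adj]
      by (intro sum.mono_neutral_left) blast+
    with rows v SV show ?thesis by auto
  qed
  moreover have "(\<Sum>v\<in>S. A v w) = 1" if w: "w \<in> S" for w
  proof -
    have "(\<Sum>v\<in>S. A v w) = (\<Sum>v\<in>V. A v w)"
      using fin SV w closed ER adjacency_matrix_zero[OF adj]
      by (intro sum.mono_neutral_left) blast+
    with cols w SV show ?thesis by auto
  qed
  moreover have "adjacency_matrix S (E \<inter> S \<times> S) A"
    using adj SV unfolding adjacency_matrix_def by auto
  ultimately show ?thesis unfolding doubly_stochasticable_def by blast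
qed

lemma doubly_stochasticable_from_classes:
  assumes fin: "finite V" and R: "equiv V R" and ER: "E \<subseteq> R"
    and classes: "\<forall>S\<in>V // R. doubly_stochasticable S (E \<inter> S \<times> S)"
  shows "doubly_stochasticable V E"
proof -
  obtain M where M: "\<forall>S\<in>V // R. adjacency_matrix S (E \<inter> S \<times> S) (M S) \<and>
      (\<forall>v\<in>S. (\<Sum>w\<in>S. M S v w) = 1) \<and> (\<forall>w\<in>S. (\<Sum>v\<in>S. M S v w) = 1)"
    using bchoice[OF classes[unfolded doubly_stochasticable_def]] by blast
  define A where "A v w = (if (v, w) \<in> R then M (R``{v}) v w else 0)" for v w
  have class_in: "R``{v} \<in> V // R" if "v \<in> V" for v
    using that by (rule quotientI)
  have class_sub: "R``{v} \<subseteq> V" if "v \<in> V" for v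
    using in_quotient_imp_subset[OF R class_in[OF that]] .
  have same_class: "R``{w} = R``{v}" if "(v, w) \<in> R" for v w
    using that equiv_class_eq_iff[OF R] by blast
  have by_row: "A v w = (if w \<in> R``{v} then M (R``{v}) v w else 0)" for v w
    unfolding A_def by simp
  have by_col: "A v w = (if v \<in> R``{w} then M (R``{w}) v w else 0)" for v w
    unfolding A_def using same_class R unfolding equiv_def sym_def by auto
  have "adjacency_matrix V E A"
    unfolding adjacency_matrix_def
  proof (intro ballI)
    fix v w assume v: "v \<in> V" and w: "w \<in> V"
    show "A v w \<ge> 0 \<and> (A v w > 0 \<longleftrightarrow> (v, w) \<in> E)"
    proof (cases "(v, w) \<in> R")
      case True
      then have "v \<in> R``{v}" "w \<in> R``{v}" using equiv_class_self[OF R v] by auto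
      then show ?thesis
        using M class_in[OF v] True unfolding A_def adjacency_matrix_def by auto
    qed (use ER A_def in auto)
  qed
  moreover have "(\<Sum>w\<in>V. A v w) = 1" if v: "v \<in> V" for v
  proof -
    have "(\<Sum>w\<in>V. A v w) = (\<Sum>w\<in>V \<inter> R``{v}. M (R``{v}) v w)"
      unfolding by_row by (rule sum.inter_restrict[OF fin, symmetric])
    also have "V \<inter> R``{v} = R``{v}" using class_sub[OF v] by blast
    finally show ?thesis using M class_in[OF v] equiv_class_self[OF R v] by simp
  qed
  moreover have "(\<Sum>v\<in>V. A v w) = 1" if w: "w \<in> V" for w
  proof -
    have "(\<Sum>v\<in>V. A v w) = (\<Sum>v\<in>V \<inter> R``{w}. M (R``{w}) v w)"
      unfolding by_col by (rule sum.inter_restrict[OF fin, symmetric])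
    also have "V \<inter> R``{w} = R``{w}" using class_sub[OF w] by blast
    finally show ?thesis using M class_in[OF w] equiv_class_self[OF R w] by simp
  qed
  ultimately show ?thesis unfolding doubly_stochasticable_def by blast
qed

lemma doubly_stochasticable_iff_classes:
  assumes "finite V" "equiv V R" "E \<subseteq> R"
  shows "doubly_stochasticable V E \<longleftrightarrow> (\<forall>S\<in>V // R. doubly_stochasticable S (E \<inter> S \<times> S))"
  using doubly_stochasticable_restrict_class[OF assms] doubly_stochasticable_from_classes[OF assms]
  by blast

lemma rtrancl_Image_subset:
  assumes "E \<subseteq> V \<times> V" "v \<in> V"
  shows "E\<^sup>* `` {v} \<subseteq> V"
proof -
  have "E\<^sup>* `` V = V" using assms(1) by (intro Image_closed_trancl) blast
  with assms(2) show ?thesis by blast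
qed

lemma reachability_equiv:
  assumes "strongly_semiconnected V E"
  shows "equiv V (E\<^sup>* \<inter> V \<times> V)"
  using assms unfolding equiv_def refl_on_def sym_def trans_def strongly_semiconnected_def
  by (auto intro: rtrancl_trans)

lemma reachability_quotient:
  assumes "E \<subseteq> V \<times> V"
  shows "V // (E\<^sup>* \<inter> V \<times> V) = (\<lambda>v. E\<^sup>* `` {v}) ` V"
proof -
  have "(E\<^sup>* \<inter> V \<times> V) `` {v} = E\<^sup>* `` {v}" if "v \<in> V" for v
    using rtrancl_Image_subset[OF assms that] that by blast
  then show ?thesis unfolding quotient_def by auto
qed

lemma rtrancl_Restr_forward_closed:
  assumes closed: "E `` C \<subseteq> C" and "x \<in> C" "(x, y) \<in> E\<^sup>*"
  shows "(x, y) \<in> (E \<inter> C \<times> C)\<^sup>*"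
  using assms(3)
proof (induction rule: rtrancl_induct)
  case (step y z)
  have "y \<in> C" using step.hyps(1) assms(2) Image_closed_trancl[OF closed] by blast
  then have "(y, z) \<in> E \<inter> C \<times> C" using step.hyps(2) closed by blast
  with step.IH show ?case by (rule rtrancl_into_rtrancl)
qed simp

lemma strongly_connected_reach_class:
  assumes "E \<subseteq> V \<times> V" "strongly_semiconnected V E" "v \<in> V"
  shows "strongly_connected (E\<^sup>* `` {v}) (E \<inter> E\<^sup>* `` {v} \<times> E\<^sup>* `` {v})"
  unfolding strongly_connected_def
proof (intro conjI ballI)
  let ?C = "E\<^sup>* `` {v}"
  show "?C \<noteq> {}" by blast
  fix a b assume a: "a \<in> ?C" and b: "b \<in> ?C"
  have "(a, v) \<in> E\<^sup>*"
    using a rtrancl_Image_subset[OF assms(1,3)] assms(2,3) unfolding strongly_semiconnected_def by blast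
  with b have "(a, b) \<in> E\<^sup>*" by (blast intro: rtrancl_trans)
  moreover have "E `` ?C \<subseteq> ?C" by (blast intro: rtrancl_into_rtrancl)
  ultimately show "(a, b) \<in> (E \<inter> ?C \<times> ?C)\<^sup>*" using a rtrancl_Restr_forward_closed by metis
qed

lemma strongly_connected_subdigraph_subset_reach:
  assumes "subdigraph V' E' V E" "strongly_connected V' E'" "v \<in> V'"
  shows "V' \<subseteq> E\<^sup>* `` {v}"
proof
  fix x assume "x \<in> V'"
  then have "(v, x) \<in> E'\<^sup>*" using assms(2,3) unfolding strongly_connected_def by blast
  moreover have "E' \<subseteq> E" using assms(1) unfolding subdigraph_def by blast
  ultimately show "x \<in> E\<^sup>* `` {v}" using rtrancl_mono by blast
qed

lemma scc_iff_reach_class: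
  assumes EV: "E \<subseteq> V \<times> V" and ss: "strongly_semiconnected V E"
  shows "scc V E V' E' \<longleftrightarrow> (\<exists>v\<in>V. V' = E\<^sup>* `` {v} \<and> E' = E \<inter> V' \<times> V')"
proof
  assume scc: "scc V E V' E'"
  then have sub: "subdigraph V' E' V E" and sc: "strongly_connected V' E'"
    unfolding scc_def by blast+
  then obtain v where v: "v \<in> V'" and vV: "v \<in> V"
    unfolding strongly_connected_def subdigraph_def by blast
  let ?C = "E\<^sup>* `` {v}"
  have "V' \<subseteq> ?C" using strongly_connected_subdigraph_subset_reach[OF sub sc v] .
  moreover have "subdigraph ?C (E \<inter> ?C \<times> ?C) V E"
    using rtrancl_Image_subset[OF EV vV] unfolding subdigraph_def by blast
  moreover have "E' \<subseteq> E \<inter> ?C \<times> ?C" using sub calculation(1) unfolding subdigraph_def by blast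
  ultimately have "?C = V' \<and> E \<inter> ?C \<times> ?C = E'"
    using scc strongly_connected_reach_class[OF EV ss vV] unfolding scc_def by blast
  with vV show "\<exists>v\<in>V. V' = E\<^sup>* `` {v} \<and> E' = E \<inter> V' \<times> V'" by blast
next
  assume "\<exists>v\<in>V. V' = E\<^sup>* `` {v} \<and> E' = E \<inter> V' \<times> V'"
  then obtain v where vV: "v \<in> V" and V': "V' = E\<^sup>* `` {v}" and E': "E' = E \<inter> V' \<times> V'"
    by blast
  have "subdigraph V' E' V E"
    using rtrancl_Image_subset[OF EV vV] unfolding V' E' subdigraph_def by blast
  moreover have "strongly_connected V' E'"
    using strongly_connected_reach_class[OF EV ss vV] unfolding V' E' .
  moreover have "V'' = V' \<and> E'' = E'"
    if "subdigraph V'' E'' V E" "strongly_connected V'' E''" "V' \<subseteq> V''" "E' \<subseteq> E''" for V'' E''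
  proof -
    have "V'' \<subseteq> V'"
      using strongly_connected_subdigraph_subset_reach[OF that(1,2)] that(3) unfolding V' by blast
    with that show ?thesis unfolding E' subdigraph_def by blast
  qed
  ultimately show "scc V E V' E'" unfolding scc_def by blast
qed

theorem lemma3p1:
  fixes V :: "'a set" and E :: "('a \<times> 'a) set"
  assumes "digraph V E"
    and "strongly_semiconnected V E"
  shows "doubly_stochasticable V E \<longleftrightarrow>
           (\<forall>V' E'. scc V E V' E' \<longrightarrow> doubly_stochasticable V' E')"
proof -
  let ?R = "E\<^sup>* \<inter> V \<times> V"
  have fin: "finite V" and EV: "E \<subseteq> V \<times> V" using assms(1) unfolding digraph_def by auto
  have "E \<subseteq> ?R" using EV by blast
  with fin reachability_equiv[OF assms(2)]
  have "doubly_stochasticable V E \<longleftrightarrow> (\<forall>S\<in>V // ?R. doubly_stochasticable S (E \<inter> S \<times> S))"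
    by (rule doubly_stochasticable_iff_classes)
  also have "\<dots> \<longleftrightarrow> (\<forall>V' E'. scc V E V' E' \<longrightarrow> doubly_stochasticable V' E')"
    unfolding reachability_quotient[OF EV] scc_iff_reach_class[OF EV assms(2)] by blast
  finally show ?thesis .
qed

end
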